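(* Let $X$ be a topological space, $Y$ a compact metric space, $A$ a finite subset of $Y$ and $\epsilon>0$. Let $Z$ denote either $U_\epsilon(Y)$ or $\mathcal{U}_\epsilon(A)$. If $f,g:X\to Z$ are continuous and the map $f\cup g:X\to Z$, $(f\cup g)(x)=f(x)\cup g(x)$, is well-defined (i.e. $f(x)\cup g(x)\in Z$ for all $x$), then $f\cup g$ is continuous and homotopic to both $f$ and $g$.
   Context: For a compact metric space $Y$, $2^Y$ is the set of nonempty closed subsets of $Y$ with the upper semifinite topology, whose base consists of the sets $B(U)=\{C\in 2^Y\mid C\subset U\}$ for $U\subseteq Y$ open. $U_\epsilon(Y)=\{C\in 2^Y\mid \mathrm{diam}(C)<\epsilon\}$ with the subspace topology. For finite $A\subset Y$, $\mathcal{U}_\epsilon(A)=\{C\subseteq A\mid C\neq\emptyset,\ \mathrm{diam}(C)<\epsilon\}$, a finite poset under inclusion regarded as a finite $T_0$ space whose open sets are the down-sets. *)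

theory Defs
  imports "HOL-Analysis.Analysis"
begin

definition mdiam :: "('b \<Rightarrow> 'b \<Rightarrow> real) \<Rightarrow> 'b set \<Rightarrow> real" where
  "mdiam d C = (SUP p\<in>C \<times> C. d (fst p) (snd p))"

text \<open>The hyperspace 2^Y of nonempty closed subsets of the metric space (M,d), with the
  upper semifinite topology generated by the base B(U) = {C. C subset U}, U open.\<close>
definition hyper_top :: "'b set \<Rightarrow> ('b \<Rightarrow> 'b \<Rightarrow> real) \<Rightarrow> 'b set topology" where
  "hyper_top M d = topology_generated_by
     {{C. closedin (Metric_space.mtopology M d) C \<and> C \<noteq> {} \<and> C \<subseteq> U} | U.
        openin (Metric_space.mtopology M d) U}"

definition Ueps_top :: "'b set \<Rightarrow> ('b \<Rightarrow> 'b \<Rightarrow> real) \<Rightarrow> real \<Rightarrow> 'b set topology" where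
  "Ueps_top M d \<epsilon> = subtopology (hyper_top M d) {C. mdiam d C < \<epsilon>}"

definition Ufin :: "('b \<Rightarrow> 'b \<Rightarrow> real) \<Rightarrow> 'b set \<Rightarrow> real \<Rightarrow> 'b set set" where
  "Ufin d A \<epsilon> = {C. C \<subseteq> A \<and> C \<noteq> {} \<and> mdiam d C < \<epsilon>}"

text \<open>Finite T0 space: open sets are the down-sets of the poset (under inclusion).\<close>
definition Ufin_top :: "('b \<Rightarrow> 'b \<Rightarrow> real) \<Rightarrow> 'b set \<Rightarrow> real \<Rightarrow> 'b set topology" where
  "Ufin_top d A \<epsilon> = topology (\<lambda>S. S \<subseteq> Ufin d A \<epsilon> \<and>
      (\<forall>C\<in>S. \<forall>D\<in>Ufin d A \<epsilon>. D \<subseteq> C \<longrightarrow> D \<in> S))"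

lemma istopology_downsets:
  "istopology (\<lambda>S. S \<subseteq> P \<and> (\<forall>C\<in>S. \<forall>D\<in>P. D \<subseteq> C \<longrightarrow> D \<in> S))"
  unfolding istopology_def by blast

lemma openin_Ufin_top:
  "openin (Ufin_top d A \<epsilon>) S \<longleftrightarrow>
     S \<subseteq> Ufin d A \<epsilon> \<and> (\<forall>C\<in>S. \<forall>D\<in>Ufin d A \<epsilon>. D \<subseteq> C \<longrightarrow> D \<in> S)"
  unfolding Ufin_top_def by (simp add: topology_inverse'[OF istopology_downsets])

lemma topspace_Ufin_top: "topspace (Ufin_top d A \<epsilon>) = Ufin d A \<epsilon>"
  unfolding topspace_def openin_Ufin_top by blast

end

(* In both spaces every point C has arbitrarily small open neighbourhoods V that are
   ideals for the union: for D, E and D \<union> E in the space, D \<union> E \<in> V iff D \<in> V and E \<in> V.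
   For U_eps(Y) these are the traces of the basic sets B(U), for the finite poset the
   down-set of C.
   One implication makes f \<union> g continuous; the other makes every open set a down-set,
   and then maps f \<le> f' are homotopic through the homotopy that equals f' at time 0
   and f at all later times. *)
theory Submission
  imports Defs
begin

unbundle lattice_syntax

definition join_ideal_in :: "'a::semilattice_sup topology \<Rightarrow> 'a set \<Rightarrow> bool" where
  "join_ideal_in Z V \<longleftrightarrow>
     (\<forall>D\<in>topspace Z. \<forall>E\<in>topspace Z. D \<squnion> E \<in> topspace Z \<longrightarrow> (D \<squnion> E \<in> V \<longleftrightarrow> D \<in> V \<and> E \<in> V))"

lemma join_ideal_in_Int:
  "join_ideal_in Z V \<Longrightarrow> join_ideal_in Z V' \<Longrightarrow> join_ideal_in Z (V \<inter> V')"
  unfolding join_ideal_in_def by blast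

lemma join_ideal_in_subtopology:
  "join_ideal_in Z V \<Longrightarrow> join_ideal_in (subtopology Z S) (V \<inter> S)"
  unfolding join_ideal_in_def by auto

lemma neighbourhood_base_of_openin_and:
  "neighbourhood_base_of (\<lambda>V. openin Z V \<and> P V) Z \<longleftrightarrow>
     (\<forall>W x. openin Z W \<and> x \<in> W \<longrightarrow> (\<exists>V. openin Z V \<and> P V \<and> x \<in> V \<and> V \<subseteq> W))"
  by (subst open_neighbourhood_base_of) auto

lemma neighbourhood_base_of_topology_generated_by:
  assumes basis: "\<And>S. S \<in> \<S> \<Longrightarrow> P S"
    and P_Int: "\<And>S T. P S \<Longrightarrow> P T \<Longrightarrow> P (S \<inter> T)"
  shows "neighbourhood_base_of (\<lambda>V. openin (topology_generated_by \<S>) V \<and> P V)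
           (topology_generated_by \<S>)"
proof -
  let ?Q = "\<lambda>V. openin (topology_generated_by \<S>) V \<and> P V"
  have Q_Int: "?Q (V \<inter> V')" if "?Q V" "?Q V'" for V V'
    using that by (auto intro: P_Int)
  have "\<forall>x\<in>W. \<exists>V. ?Q V \<and> x \<in> V \<and> V \<subseteq> W" if "generate_topology_on \<S> W" for W
    using that
  proof induction
    case (Int a b)
    show ?case
    proof
      fix x assume "x \<in> a \<inter> b"
      with Int.IH obtain V V' where "?Q V" "x \<in> V" "V \<subseteq> a" "?Q V'" "x \<in> V'" "V' \<subseteq> b"
        by (meson IntD1 IntD2)
      with Q_Int show "\<exists>V. ?Q V \<and> x \<in> V \<and> V \<subseteq> a \<inter> b"
        by blast
    qed
  next
    case (UN K)
    show ?case
    proof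
      fix x assume "x \<in> \<Union>K"
      then obtain k where "k \<in> K" "x \<in> k" by blast
      with UN.IH obtain V where "?Q V" "x \<in> V" "V \<subseteq> k"
        by blast
      with \<open>k \<in> K\<close> show "\<exists>V. ?Q V \<and> x \<in> V \<and> V \<subseteq> \<Union>K"
        by blast
    qed
  next
    case (Basis s)
    then show ?case by (blast intro: basis topology_generated_by_Basis)
  qed simp
  then show ?thesis
    unfolding neighbourhood_base_of_openin_and by (auto simp: openin_topology_generated_by_iff)
qed

lemma neighbourhood_base_of_join_ideal_subtopology:
  assumes "neighbourhood_base_of (\<lambda>V. openin Z V \<and> join_ideal_in Z V) Z"
  shows "neighbourhood_base_of (\<lambda>V. openin (subtopology Z S) V \<and> join_ideal_in (subtopology Z S) V)
           (subtopology Z S)"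
  unfolding neighbourhood_base_of_openin_and
proof (intro allI impI)
  fix W C assume "openin (subtopology Z S) W \<and> C \<in> W"
  then obtain T where T: "openin Z T" "W = T \<inter> S" "C \<in> T" "C \<in> S"
    by (auto simp: openin_subtopology)
  obtain V where "openin Z V" "join_ideal_in Z V" "C \<in> V" "V \<subseteq> T"
    using assms T(1,3) unfolding neighbourhood_base_of_openin_and by blast
  with T show "\<exists>V'. openin (subtopology Z S) V' \<and> join_ideal_in (subtopology Z S) V' \<and>
      C \<in> V' \<and> V' \<subseteq> W"
    by (intro exI[of _ "V \<inter> S"]) (auto simp: openin_subtopology_Int join_ideal_in_subtopology)
qed

lemma openin_down_closed_if_join_ideal_base:
  assumes "neighbourhood_base_of (\<lambda>V. openin Z V \<and> join_ideal_in Z V) Z"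
    and "openin Z W" "C \<in> W" "D \<in> topspace Z" "D \<le> C"
  shows "D \<in> W"
proof -
  obtain V where V: "join_ideal_in Z V" "C \<in> V" "V \<subseteq> W"
    using assms(1-3) unfolding neighbourhood_base_of_openin_and by blast
  have "C \<in> topspace Z"
    using assms(2,3) openin_subset by blast
  moreover have "D \<squnion> C = C"
    using assms(5) by (simp add: sup_absorb2)
  ultimately have "D \<in> V"
    using V(1,2) assms(4) unfolding join_ideal_in_def by metis
  with V(3) show ?thesis by blast
qed

lemma continuous_map_sup_if_join_ideal_base:
  assumes base: "neighbourhood_base_of (\<lambda>V. openin Z V \<and> join_ideal_in Z V) Z"
    and f: "continuous_map X Z f" and g: "continuous_map X Z g"
    and fg: "\<forall>x\<in>topspace X. f x \<squnion> g x \<in> topspace Z"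
  shows "continuous_map X Z (\<lambda>x. f x \<squnion> g x)"
  unfolding continuous_map_def
proof (intro conjI allI impI)
  show "(\<lambda>x. f x \<squnion> g x) \<in> topspace X \<rightarrow> topspace Z"
    using fg by blast
  have fZ: "f x \<in> topspace Z" and gZ: "g x \<in> topspace Z" if "x \<in> topspace X" for x
    using that f g by (auto dest: continuous_map_image_subset_topspace)
  fix W assume W: "openin Z W"
  show "openin X {x \<in> topspace X. f x \<squnion> g x \<in> W}"
  proof (subst openin_subopen, intro ballI)
    fix x assume x: "x \<in> {x \<in> topspace X. f x \<squnion> g x \<in> W}"
    then obtain V where V: "openin Z V" "join_ideal_in Z V" "f x \<squnion> g x \<in> V" "V \<subseteq> W"
      using base W unfolding neighbourhood_base_of_openin_and by blast
    let ?T = "{y \<in> topspace X. f y \<in> V} \<inter> {y \<in> topspace X. g y \<in> V}"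
    have "openin X ?T"
      using V(1) f g by (intro openin_Int openin_continuous_map_preimage)
    moreover have "x \<in> ?T" "?T \<subseteq> {x \<in> topspace X. f x \<squnion> g x \<in> W}"
      using V x fZ gZ fg unfolding join_ideal_in_def by auto
    ultimately show "\<exists>T. openin X T \<and> x \<in> T \<and> T \<subseteq> {x \<in> topspace X. f x \<squnion> g x \<in> W}"
      by blast
  qed
qed

lemma homotopic_with_pointwise_le:
  fixes f f' :: "'a \<Rightarrow> 'b::order"
  assumes down_closed: "\<And>W C D. openin Z W \<Longrightarrow> C \<in> W \<Longrightarrow> D \<in> topspace Z \<Longrightarrow> D \<le> C \<Longrightarrow> D \<in> W"
    and f: "continuous_map X Z f" and f': "continuous_map X Z f'"
    and le: "\<forall>x\<in>topspace X. f x \<le> f' x"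
  shows "homotopic_with (\<lambda>_. True) X Z f' f"
proof -
  define h where "h = (\<lambda>(t::real, x). if t = 0 then f' x else f x)"
  let ?I = "top_of_set {0..1::real}"
  have fZ: "f x \<in> topspace Z" and f'Z: "f' x \<in> topspace Z" if "x \<in> topspace X" for x
    using that f f' by (auto dest: continuous_map_image_subset_topspace)
  have "continuous_map (prod_topology ?I X) Z h"
    unfolding continuous_map_def
  proof (intro conjI allI impI)
    show "h \<in> topspace (prod_topology ?I X) \<rightarrow> topspace Z"
      using fZ f'Z by (auto simp: h_def)
    fix W assume W: "openin Z W"
    define P where "P = {x \<in> topspace X. f' x \<in> W}"
    define Q where "Q = {x \<in> topspace X. f x \<in> W}"
    have "openin X P" "openin X Q"
      unfolding P_def Q_def using W f f' by (auto intro: openin_continuous_map_preimage)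
    moreover have "openin ?I ({0..1} \<inter> {0<..})"
      by (rule openin_open_Int) auto
    ultimately have "openin (prod_topology ?I X) ({0..1} \<times> P \<union> ({0..1} \<inter> {0<..}) \<times> Q)"
      by (intro openin_Un openin_prod_Times_iff[THEN iffD2]) auto
    moreover have "P \<subseteq> Q"
      unfolding P_def Q_def using down_closed[OF W] fZ le by blast
    then have "{p \<in> topspace (prod_topology ?I X). h p \<in> W} = {0..1} \<times> P \<union> ({0..1} \<inter> {0<..}) \<times> Q"
      by (auto simp: h_def P_def Q_def split: if_splits)
    ultimately show "openin (prod_topology ?I X) {p \<in> topspace (prod_topology ?I X). h p \<in> W}"
      by simp
  qed
  then show ?thesis
    unfolding homotopic_with_def by (intro exI[of _ h]) (auto simp: h_def)
qed

lemma neighbourhood_base_of_join_ideal_hyper_top: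
  "neighbourhood_base_of (\<lambda>V. openin (hyper_top M d) V \<and> join_ideal_in (hyper_top M d) V)
     (hyper_top M d)"
  unfolding hyper_top_def
  by (rule neighbourhood_base_of_topology_generated_by) (auto simp: join_ideal_in_def)

lemma neighbourhood_base_of_join_ideal_Ufin_top:
  "neighbourhood_base_of (\<lambda>V. openin (Ufin_top d A \<epsilon>) V \<and> join_ideal_in (Ufin_top d A \<epsilon>) V)
     (Ufin_top d A \<epsilon>)"
  unfolding neighbourhood_base_of_openin_and
proof (intro allI impI)
  fix W C assume W: "openin (Ufin_top d A \<epsilon>) W \<and> C \<in> W"
  let ?V = "{D \<in> Ufin d A \<epsilon>. D \<subseteq> C}"
  have "openin (Ufin_top d A \<epsilon>) ?V" "join_ideal_in (Ufin_top d A \<epsilon>) ?V"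
    unfolding openin_Ufin_top join_ideal_in_def topspace_Ufin_top by auto
  moreover have "C \<in> ?V" "?V \<subseteq> W"
    using W unfolding openin_Ufin_top by auto
  ultimately show "\<exists>V. openin (Ufin_top d A \<epsilon>) V \<and> join_ideal_in (Ufin_top d A \<epsilon>) V \<and>
      C \<in> V \<and> V \<subseteq> W"
    by blast
qed

theorem lemma4p2:
  fixes X :: "'a topology" and M :: "'b set" and d :: "'b \<Rightarrow> 'b \<Rightarrow> real"
    and A :: "'b set" and \<epsilon> :: real and Z :: "'b set topology"
    and f g :: "'a \<Rightarrow> 'b set"
  assumes "Metric_space M d"
    and "compact_space (Metric_space.mtopology M d)"
    and "finite A" and "A \<subseteq> M"
    and "\<epsilon> > 0"
    and "Z = Ueps_top M d \<epsilon> \<or> Z = Ufin_top d A \<epsilon>"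
    and "continuous_map X Z f" and "continuous_map X Z g"
    and "\<forall>x\<in>topspace X. f x \<union> g x \<in> topspace Z"
  shows "continuous_map X Z (\<lambda>x. f x \<union> g x)
    \<and> homotopic_with (\<lambda>_. True) X Z (\<lambda>x. f x \<union> g x) f
    \<and> homotopic_with (\<lambda>_. True) X Z (\<lambda>x. f x \<union> g x) g"
proof -
  have base: "neighbourhood_base_of (\<lambda>V. openin Z V \<and> join_ideal_in Z V) Z"
    using assms(6) neighbourhood_base_of_join_ideal_Ufin_top
      neighbourhood_base_of_join_ideal_subtopology[OF neighbourhood_base_of_join_ideal_hyper_top]
    unfolding Ueps_top_def by blast
  have cont: "continuous_map X Z (\<lambda>x. f x \<union> g x)"
    using continuous_map_sup_if_join_ideal_base[OF base assms(7-9)] .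
  have down_closed: "\<And>W C D. openin Z W \<Longrightarrow> C \<in> W \<Longrightarrow> D \<in> topspace Z \<Longrightarrow> D \<subseteq> C \<Longrightarrow> D \<in> W"
    using openin_down_closed_if_join_ideal_base[OF base] .
  show ?thesis
    using cont homotopic_with_pointwise_le[OF down_closed assms(7) cont]
      homotopic_with_pointwise_le[OF down_closed assms(8) cont] by simp
qed

end
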